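(* Let $M$ be a complete pointed metric space which is a length space, and let $X$ be a Banach space. Then the Banach space $\mathrm{Lip}_0(M,X)$ has the Daugavet property. *)

theory Defs
  imports "HOL-Analysis.Analysis"
begin

definition curve_length :: "(real \<Rightarrow> 'a::metric_space) \<Rightarrow> real \<Rightarrow> real \<Rightarrow> ereal" where
  "curve_length g a b = Sup {ereal (\<Sum>i<n. dist (g (t (Suc i))) (g (t i))) | n t.
      t 0 = a \<and> t n = b \<and> (\<forall>i<n. t i \<le> t (Suc i))}"

definition length_space :: "'a::metric_space set \<Rightarrow> bool" where
  "length_space M \<longleftrightarrow> (\<forall>x\<in>M. \<forall>y\<in>M. ereal (dist x y) =
      Inf {curve_length g 0 1 | g. continuous_on {0..1} g \<and> g ` {0..1} \<subseteq> M \<and> g 0 = x \<and> g 1 = y})"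

definition Lip0 :: "'m::metric_space \<Rightarrow> ('m \<Rightarrow> 'x::real_normed_vector) set" where
  "Lip0 m0 = {f. f m0 = 0 \<and> (\<exists>K. \<forall>x y. dist (f x) (f y) \<le> K * dist x y)}"

definition lipnorm :: "('m::metric_space \<Rightarrow> 'x::real_normed_vector) \<Rightarrow> real" where
  "lipnorm f = Sup {dist (f x) (f y) / dist x y | x y. x \<noteq> y}"

text \<open>A (real) normed space, given as a linear space S of functions (pointwise operations) with norm N,
  has the Daugavet property if every rank-one bounded operator T f = phi f *R y
  (phi a bounded linear functional on S, y in S) satisfies ||Id + T|| = 1 + ||T||,
  where operator norms are suprema over the unit ball of S.\<close>
definition daugavet_property :: "('a \<Rightarrow> 'x::real_vector) set \<Rightarrow> (('a \<Rightarrow> 'x) \<Rightarrow> real) \<Rightarrow> bool" where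
  "daugavet_property S N \<longleftrightarrow>
    (\<forall>(\<phi>::('a \<Rightarrow> 'x) \<Rightarrow> real) y.
       (\<forall>f\<in>S. \<forall>g\<in>S. \<phi> (\<lambda>t. f t + g t) = \<phi> f + \<phi> g) \<and>
       (\<forall>f\<in>S. \<forall>c. \<phi> (\<lambda>t. c *\<^sub>R f t) = c * \<phi> f) \<and>
       (\<exists>C. \<forall>f\<in>S. \<bar>\<phi> f\<bar> \<le> C * N f) \<and> y \<in> S \<longrightarrow>
       Sup {N (\<lambda>t. f t + \<phi> f *\<^sub>R y t) | f. f \<in> S \<and> N f \<le> 1}
         = 1 + Sup {N (\<lambda>t. \<phi> f *\<^sub>R y t) | f. f \<in> S \<and> N f \<le> 1})"

end

(*
  For a bounded functional phi and y in Lip0(M,X) only ||Id + phi (x) y|| >= 1 + ||phi|| ||y||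
  needs an argument. Since M is a length space, two points where y is almost ||y||-steep are joined
  by an almost geodesic chain; most of its length is carried by short steps (u, v) on which y is
  still almost ||y||-steep, and n of them can be chosen far apart compared to their lengths. Given g
  in the unit ball, replace (1 - d) g near one such step by a translate of (1 - d) y / ||y||, glued
  in with a logarithmic cutoff so that the result stays 1-Lipschitz. The n candidate modifications
  have disjoint supports, so their sum has norm at most 4 and phi of one of them is at least
  -4 ||phi|| / n. The modified function z has phi z close to (1 - d) phi g, and z + phi(z) y has
  slope close to 1 + |phi g| ||y|| at the chosen step.
*)

theory Submission
  imports Defs
begin

section \<open>The Lipschitz norm\<close>

lemma Lip0_iff: "f \<in> Lip0 m0 \<longleftrightarrow> f m0 = 0 \<and> (\<exists>K. K-lipschitz_on UNIV f)"
proof -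
  have "(\<exists>K. \<forall>x y. dist (f x) (f y) \<le> K * dist x y) \<longleftrightarrow> (\<exists>K. K-lipschitz_on UNIV f)"
  proof
    assume "\<exists>K. \<forall>x y. dist (f x) (f y) \<le> K * dist x y"
    then obtain K where K: "\<forall>x y. dist (f x) (f y) \<le> K * dist x y" by blast
    have "dist (f x) (f y) \<le> max K 0 * dist x y" for x y
      using K mult_right_mono[of K "max K 0" "dist x y"] by (meson max.cobounded1 order_trans zero_le_dist)
    then have "(max K 0)-lipschitz_on UNIV f" by (intro lipschitz_onI) auto
    then show "\<exists>K. K-lipschitz_on UNIV f" ..
  qed (auto simp: lipschitz_on_def)
  then show ?thesis unfolding Lip0_def by simp
qed

lemma lipnorm_quotients_bdd:
  assumes "C-lipschitz_on UNIV f"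
  shows "bdd_above {dist (f x) (f y) / dist x y |x y. x \<noteq> y}"
  using assms by (intro bdd_aboveI[of _ C]) (auto simp: divide_le_eq dest: lipschitz_onD)

lemma lipnorm_bound:
  assumes "C-lipschitz_on UNIV f"
  shows "dist (f x) (f y) \<le> lipnorm f * dist x y"
proof (cases "x = y")
  case False
  have "dist (f x) (f y) / dist x y \<le> lipnorm f"
    unfolding lipnorm_def using False by (intro cSup_upper lipnorm_quotients_bdd[OF assms]) blast
  then show ?thesis using False by (simp add: divide_le_eq)
qed simp

(* For a one-point space the quotient set is empty and lipnorm is the junk value Sup {}. *)
lemma lipnorm_least:
  fixes f :: "'m::metric_space \<Rightarrow> 'x::real_normed_vector"
  assumes "\<exists>x y::'m. x \<noteq> y" and "C-lipschitz_on UNIV f"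
  shows "lipnorm f \<le> C"
  unfolding lipnorm_def
proof (rule cSup_least)
  show "{dist (f x) (f y) / dist x y |x y. x \<noteq> y} \<noteq> {}" using assms(1) by blast
qed (use assms(2) in \<open>auto simp: divide_le_eq dest: lipschitz_onD\<close>)

lemma lipnorm_nonneg:
  fixes f :: "'m::metric_space \<Rightarrow> 'x::real_normed_vector"
  assumes "\<exists>x y::'m. x \<noteq> y" and "C-lipschitz_on UNIV f"
  shows "0 \<le> lipnorm f"
proof -
  obtain x y :: 'm where "x \<noteq> y" using assms(1) by blast
  then have "0 < dist x y" by simp
  moreover have "0 \<le> lipnorm f * dist x y"
    using lipnorm_bound[OF assms(2), of x y] zero_le_dist[of "f x" "f y"] by linarith
  ultimately show ?thesis by (simp add: zero_le_mult_iff)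
qed

lemma lipschitz_on_lipnorm:
  fixes f :: "'m::metric_space \<Rightarrow> 'x::real_normed_vector"
  assumes "\<exists>x y::'m. x \<noteq> y" and "C-lipschitz_on UNIV f"
  shows "(lipnorm f)-lipschitz_on UNIV f"
  using lipnorm_bound[OF assms(2)] lipnorm_nonneg[OF assms] by (intro lipschitz_onI)

lemma less_lipnorm_witness:
  fixes f :: "'m::metric_space \<Rightarrow> 'x::real_normed_vector"
  assumes "\<exists>x y::'m. x \<noteq> y" and "C-lipschitz_on UNIV f" and "\<theta> < lipnorm f"
  obtains x y where "x \<noteq> y" "\<theta> * dist x y < dist (f x) (f y)"
proof -
  have ne: "{dist (f x) (f y) / dist x y |x y. x \<noteq> y} \<noteq> {}" using assms(1) by blast
  obtain q where "q \<in> {dist (f x) (f y) / dist x y |x y. x \<noteq> y}" "\<theta> < q"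
    using assms(3) less_cSup_iff[OF ne lipnorm_quotients_bdd[OF assms(2)]]
    unfolding lipnorm_def by blast
  then show ?thesis using that by (auto simp: less_divide_eq)
qed

lemma lipnorm_scaleR:
  fixes f :: "'m::metric_space \<Rightarrow> 'x::real_normed_vector"
  assumes two_points: "\<exists>x y::'m. x \<noteq> y" and "C-lipschitz_on UNIV f"
  shows "lipnorm (\<lambda>t. c *\<^sub>R f t) = \<bar>c\<bar> * lipnorm f"
proof (rule antisym)
  have cf: "(\<bar>c\<bar> * lipnorm f)-lipschitz_on UNIV (\<lambda>t. c *\<^sub>R f t)"
    by (rule lipschitz_on_cmult[OF lipschitz_on_lipnorm[OF assms]])
  then show "lipnorm (\<lambda>t. c *\<^sub>R f t) \<le> \<bar>c\<bar> * lipnorm f"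
    by (rule lipnorm_least[OF two_points])
  show "\<bar>c\<bar> * lipnorm f \<le> lipnorm (\<lambda>t. c *\<^sub>R f t)"
  proof (cases "c = 0")
    case True
    then show ?thesis using lipnorm_nonneg[OF two_points cf] by simp
  next
    case False
    have "\<bar>c\<bar> * dist (f x) (f y) \<le> lipnorm (\<lambda>t. c *\<^sub>R f t) * dist x y" for x y
      using lipnorm_bound[OF cf, of x y] by (simp add: dist_norm flip: scaleR_diff_right)
    then have "(lipnorm (\<lambda>t. c *\<^sub>R f t) / \<bar>c\<bar>)-lipschitz_on UNIV f"
      using False lipnorm_nonneg[OF two_points cf]
      by (intro lipschitz_onI) (auto simp: field_simps)
    from lipnorm_least[OF two_points this] show ?thesis using False by (simp add: field_simps)
  qed
qed

lemma Lip0_add: "f \<in> Lip0 m0 \<Longrightarrow> g \<in> Lip0 m0 \<Longrightarrow> (\<lambda>t. f t + g t) \<in> Lip0 m0"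
  unfolding Lip0_iff using lipschitz_on_add by fastforce

lemma Lip0_scaleR: "f \<in> Lip0 m0 \<Longrightarrow> (\<lambda>t. c *\<^sub>R f t) \<in> Lip0 m0"
  unfolding Lip0_iff using lipschitz_on_cmult by fastforce

lemma Lip0_zero: "(\<lambda>t. 0) \<in> Lip0 m0"
  unfolding Lip0_iff using lipschitz_on_constant by blast

lemma lipschitz_on_Lip0:
  fixes f :: "'m::metric_space \<Rightarrow> 'x::real_normed_vector"
  assumes "\<exists>x y::'m. x \<noteq> y" "f \<in> Lip0 m0"
  shows "(lipnorm f)-lipschitz_on UNIV f"
  using assms lipschitz_on_lipnorm unfolding Lip0_iff by blast

lemma Lip0_distance_function:
  fixes e :: "'x::real_normed_vector" and m0 :: "'m::metric_space"
  assumes two_points: "\<exists>x y::'m. x \<noteq> y" and "norm e = 1"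
  shows "(\<lambda>x. dist x m0 *\<^sub>R e) \<in> Lip0 m0" and "lipnorm (\<lambda>x. dist x m0 *\<^sub>R e) = 1"
proof -
  have "\<bar>dist x m0 - dist x' m0\<bar> \<le> dist x x'" for x x'
    using dist_triangle[of x m0 x'] dist_triangle[of x' m0 x] by (simp add: dist_commute abs_le_iff)
  then have lip: "1-lipschitz_on UNIV (\<lambda>x. dist x m0 *\<^sub>R e)"
    using \<open>norm e = 1\<close> by (intro lipschitz_onI) (simp_all add: dist_norm flip: scaleR_diff_left)
  then show "(\<lambda>x. dist x m0 *\<^sub>R e) \<in> Lip0 m0" unfolding Lip0_iff by auto
  obtain x :: 'm where "x \<noteq> m0" using two_points by metis
  then have "1 * dist x m0 \<le> lipnorm (\<lambda>x. dist x m0 *\<^sub>R e) * dist x m0"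
    using lipnorm_bound[OF lip, of x m0] \<open>norm e = 1\<close> by (simp add: dist_norm)
  then have "1 \<le> lipnorm (\<lambda>x. dist x m0 *\<^sub>R e)"
    using \<open>x \<noteq> m0\<close> by (simp add: mult_le_cancel_right)
  with lipnorm_least[OF two_points lip] show "lipnorm (\<lambda>x. dist x m0 *\<^sub>R e) = 1" by simp
qed

section \<open>Gluing with a logarithmic cutoff\<close>

definition log_cutoff :: "real \<Rightarrow> real \<Rightarrow> real \<Rightarrow> real" where
  "log_cutoff s K t = max 0 (1 - ln (max t s / s) / K)"

context
  fixes s K :: real
  assumes s: "0 < s" and K: "0 < K"
begin

lemma log_cutoff_bounds: "0 \<le> log_cutoff s K t" "log_cutoff s K t \<le> 1"
  using s K by (auto simp: log_cutoff_def)

lemma log_cutoff_eq_1: "t \<le> s \<Longrightarrow> log_cutoff s K t = 1"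
  using s by (simp add: log_cutoff_def max_absorb2)

lemma log_cutoff_eq_0:
  assumes "s * exp K \<le> t"
  shows "log_cutoff s K t = 0"
proof -
  have "exp K \<le> t / s" using assms s by (simp add: le_divide_eq mult.commute)
  then have "K \<le> ln (t / s)" by (metis exp_gt_zero ln_exp ln_le_cancel_iff order_less_le_trans)
  moreover have "s \<le> t" using assms s K by (smt (verit) one_le_exp_iff mult_le_cancel_left1)
  ultimately show ?thesis using K by (simp add: log_cutoff_def max_absorb1)
qed

lemma log_cutoff_variation:
  assumes "0 \<le> t'" "t' \<le> t"
  shows "\<bar>log_cutoff s K t - log_cutoff s K t'\<bar> * t' \<le> (t - t') / K"
proof -
  define M M' where "M = max t s" and "M' = max t' s"
  have M': "0 < M'" "t' \<le> M'" "M' \<le> M" "M - M' \<le> t - t'"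
    using assms s by (auto simp: M_def M'_def)
  have "\<bar>log_cutoff s K t - log_cutoff s K t'\<bar> \<le> \<bar>ln (M / s) / K - ln (M' / s) / K\<bar>"
    unfolding log_cutoff_def M_def M'_def by (auto simp: max_def)
  also have "\<dots> = ln (M / M') / K"
    using M' s K by (simp add: ln_div flip: diff_divide_distrib)
  also have "\<dots> \<le> (M / M' - 1) / K"
    using ln_le_minus_one[of "M / M'"] M' K by (simp add: divide_right_mono)
  also have "M / M' - 1 = (M - M') / M'"
    using M' by (simp add: field_simps)
  finally have "\<bar>log_cutoff s K t - log_cutoff s K t'\<bar> * t' \<le> (M - M') / M' / K * t'"
    using assms(1) by (rule mult_right_mono)
  also have "\<dots> = (M - M') / K * (t' / M')" by simp
  also have "\<dots> \<le> (M - M') / K * 1"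
    using M' K assms by (intro mult_left_mono) auto
  also have "\<dots> \<le> (t - t') / K"
    using M' K by (simp add: divide_right_mono)
  finally show ?thesis .
qed

end

definition patch ::
  "('m::metric_space \<Rightarrow> 'x::real_normed_vector) \<Rightarrow> ('m \<Rightarrow> 'x) \<Rightarrow> 'm \<Rightarrow> real \<Rightarrow> real \<Rightarrow> 'm \<Rightarrow> 'x"
  where "patch F Y u s K x = F x + log_cutoff s K (dist x u) *\<^sub>R ((Y x - Y u) - (F x - F u))"

context
  fixes F Y :: "'m::metric_space \<Rightarrow> 'x::real_normed_vector" and u :: 'm and s K :: real
  assumes s: "0 < s" and K: "0 < K"
begin

lemma patch_near: "dist x u \<le> s \<Longrightarrow> patch F Y u s K x = Y x + (F u - Y u)"
  using log_cutoff_eq_1[OF s K] by (simp add: patch_def algebra_simps)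

lemma patch_far: "s * exp K \<le> dist x u \<Longrightarrow> patch F Y u s K x = F x"
  using log_cutoff_eq_0[OF s K] by (simp add: patch_def)

(* patch x - patch x' is a convex combination of the increments of F and Y plus
   (\<rho> x - \<rho> x') (D x'), where norm (D x') \<le> 2 a d(x', u); the logarithmic profile of the cutoff \<rho>
   makes the latter at most 2 a d(x, x') / K. *)
lemma dist_patch_le:
  assumes F: "a-lipschitz_on UNIV F" and Y: "a-lipschitz_on UNIV Y" and closer: "dist x' u \<le> dist x u"
  shows "dist (patch F Y u s K x) (patch F Y u s K x') \<le> a * (1 + 2 / K) * dist x x'"
proof -
  define \<rho> where "\<rho> x = log_cutoff s K (dist x u)" for x
  define D where "D x = (Y x - Y u) - (F x - F u)" for x
  have a: "0 \<le> a" using lipschitz_on_nonneg[OF F] .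
  have \<rho>: "0 \<le> \<rho> x" "\<rho> x \<le> 1" using log_cutoff_bounds[OF s K] by (auto simp: \<rho>_def)
  have convex: "norm ((1 - \<rho> x) *\<^sub>R (F x - F x') + \<rho> x *\<^sub>R (Y x - Y x')) \<le> a * dist x x'"
  proof -
    have "norm ((1 - \<rho> x) *\<^sub>R (F x - F x') + \<rho> x *\<^sub>R (Y x - Y x'))
        \<le> (1 - \<rho> x) * norm (F x - F x') + \<rho> x * norm (Y x - Y x')"
      using \<rho> by (intro order_trans[OF norm_triangle_ineq]) simp
    also have "\<dots> \<le> (1 - \<rho> x) * (a * dist x x') + \<rho> x * (a * dist x x')"
      using \<rho> lipschitz_onD[OF F] lipschitz_onD[OF Y]
      by (intro add_mono mult_left_mono) (auto simp: dist_norm)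
    finally show ?thesis by (simp add: algebra_simps)
  qed
  have "norm (D x') \<le> norm (Y x' - Y u) + norm (F x' - F u)"
    unfolding D_def by (rule norm_triangle_ineq4)
  also have "\<dots> \<le> 2 * a * dist x' u"
    using lipschitz_onD[OF F, of x' u] lipschitz_onD[OF Y, of x' u] by (simp add: dist_norm)
  finally have "\<bar>\<rho> x - \<rho> x'\<bar> * norm (D x') \<le> \<bar>\<rho> x - \<rho> x'\<bar> * (2 * a * dist x' u)"
    by (simp add: mult_left_mono)
  also have "\<dots> = 2 * a * (\<bar>\<rho> x - \<rho> x'\<bar> * dist x' u)" by simp
  also have "\<dots> \<le> 2 * a * ((dist x u - dist x' u) / K)"
    unfolding \<rho>_def using log_cutoff_variation[OF s K _ closer] a by (intro mult_left_mono) auto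
  also have "\<dots> \<le> 2 * a * (dist x x' / K)"
    using a K dist_triangle[of x u x'] by (intro mult_left_mono divide_right_mono) (auto simp: dist_commute)
  finally have cutoff: "norm ((\<rho> x - \<rho> x') *\<^sub>R D x') \<le> 2 * a / K * dist x x'" by simp
  have "patch F Y u s K x - patch F Y u s K x'
      = ((1 - \<rho> x) *\<^sub>R (F x - F x') + \<rho> x *\<^sub>R (Y x - Y x')) + (\<rho> x - \<rho> x') *\<^sub>R D x'"
    by (simp add: patch_def \<rho>_def D_def algebra_simps)
  then have "dist (patch F Y u s K x) (patch F Y u s K x') \<le> a * dist x x' + 2 * a / K * dist x x'"
    using convex cutoff norm_triangle_le by (metis add_mono dist_norm)
  then show ?thesis by (simp add: algebra_simps)
qed

lemma lipschitz_on_patch: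
  assumes F: "a-lipschitz_on UNIV F" and Y: "a-lipschitz_on UNIV Y"
  shows "(a * (1 + 2 / K))-lipschitz_on UNIV (patch F Y u s K)"
proof (rule lipschitz_onI)
  show "dist (patch F Y u s K x) (patch F Y u s K x') \<le> a * (1 + 2 / K) * dist x x'" for x x'
  proof (cases "dist x' u \<le> dist x u")
    case False
    then have "dist x u \<le> dist x' u" by simp
    from dist_patch_le[OF F Y this] show ?thesis by (simp add: dist_commute)
  qed (rule dist_patch_le[OF F Y])
qed (use lipschitz_on_nonneg[OF F] K in simp)

end

lemma lipschitz_on_sum_separated_supports:
  fixes h :: "nat \<Rightarrow> 'm::metric_space \<Rightarrow> 'x::real_normed_vector" and c :: "nat \<Rightarrow> 'm"
  assumes lip: "\<And>i. i < n \<Longrightarrow> B-lipschitz_on UNIV (h i)" and "0 \<le> B"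
    and supp: "\<And>i x. i < n \<Longrightarrow> L \<le> dist x (c i) \<Longrightarrow> h i x = 0"
    and sep: "\<And>i j. i < n \<Longrightarrow> j < n \<Longrightarrow> i \<noteq> j \<Longrightarrow> 2 * L \<le> dist (c i) (c j)"
  shows "(2 * B)-lipschitz_on UNIV (\<lambda>x. \<Sum>i<n. h i x)"
proof (rule lipschitz_onI)
  define near where "near x = {i. i < n \<and> dist x (c i) < L}" for x
  have card_near: "card (near x) \<le> 1" for x
  proof -
    have "i = j" if "i \<in> near x" "j \<in> near x" for i j
    proof (rule ccontr)
      assume "i \<noteq> j"
      then have "2 * L \<le> dist (c i) (c j)" using that sep by (auto simp: near_def)
      moreover have "dist (c i) (c j) \<le> dist x (c i) + dist x (c j)" by (rule dist_triangle3)
      ultimately show False using that by (auto simp: near_def)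
    qed
    then show ?thesis by (simp add: card_le_Suc0_iff_eq near_def)
  qed
  fix x x'
  define J where "J = near x \<union> near x'"
  have J: "finite J" "J \<subseteq> {..<n}" "card J \<le> 2"
    using card_Un_le[of "near x" "near x'"] card_near[of x] card_near[of x']
    by (auto simp: J_def near_def)
  have "(\<Sum>i<n. h i x) - (\<Sum>i<n. h i x') = (\<Sum>i\<in>J. h i x - h i x')"
    by (simp add: sum_subtractf[symmetric], rule sum.mono_neutral_right)
      (use J supp in \<open>auto simp: J_def near_def\<close>)
  then have "dist (\<Sum>i<n. h i x) (\<Sum>i<n. h i x') \<le> (\<Sum>i\<in>J. norm (h i x - h i x'))"
    by (simp add: dist_norm norm_sum)
  also have "\<dots> \<le> (\<Sum>i\<in>J. B * dist x x')"
    using J lipschitz_onD[OF lip] by (intro sum_mono) (auto simp: dist_norm)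
  also have "\<dots> = real (card J) * (B * dist x x')" by simp
  also have "\<dots> \<le> 2 * (B * dist x x')"
    using J \<open>0 \<le> B\<close> by (intro mult_right_mono) auto
  finally show "dist (\<Sum>i<n. h i x) (\<Sum>i<n. h i x') \<le> 2 * B * dist x x'" by simp
qed (use \<open>0 \<le> B\<close> in simp)

lemma lipschitz_on_sum_patches:
  fixes F Y :: "'m::metric_space \<Rightarrow> 'x::real_normed_vector" and u :: "nat \<Rightarrow> 'm"
  assumes F: "a-lipschitz_on UNIV F" and Y: "a-lipschitz_on UNIV Y" and "a * (1 + 2 / K) \<le> 1"
    and "0 < s" "0 < K"
    and sep: "\<And>i j. i < n \<Longrightarrow> j < n \<Longrightarrow> i \<noteq> j \<Longrightarrow> 2 * (s * exp K) \<le> dist (u i) (u j)"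
  shows "4-lipschitz_on UNIV (\<lambda>x. \<Sum>i<n. patch F Y (u i) s K x - F x)"
proof -
  have "a \<le> 1" using \<open>a * (1 + 2 / K) \<le> 1\<close> \<open>0 < K\<close> lipschitz_on_nonneg[OF F]
    by (smt (verit) divide_pos_pos mult_le_cancel_left1)
  have "2-lipschitz_on UNIV (\<lambda>x. patch F Y (u i) s K x - F x)" for i
    by (rule lipschitz_on_mono[OF lipschitz_on_diff[OF lipschitz_on_patch[OF \<open>0 < s\<close> \<open>0 < K\<close> F Y] F]])
      (use \<open>a * (1 + 2 / K) \<le> 1\<close> \<open>a \<le> 1\<close> in auto)
  then have "(2 * 2)-lipschitz_on UNIV (\<lambda>x. \<Sum>i<n. patch F Y (u i) s K x - F x)"
    by (rule lipschitz_on_sum_separated_supports[where L = "s * exp K" and c = u])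
      (use patch_far[OF \<open>0 < s\<close> \<open>0 < K\<close>] sep in auto)
  then show ?thesis by simp
qed

section \<open>Steep steps of chains in length spaces\<close>

lemma dist_le_sum_chain:
  fixes q :: "nat \<Rightarrow> 'a::metric_space"
  assumes "i \<le> j"
  shows "dist (q i) (q j) \<le> (\<Sum>k=i..<j. dist (q k) (q (Suc k)))"
  using assms
proof (induction j rule: dec_induct)
  case (step j)
  then show ?case using dist_triangle[of "q i" "q (Suc j)" "q j"] by simp
qed simp

lemma sum_chain_segment_le:
  fixes q :: "nat \<Rightarrow> 'a::metric_space"
  assumes "i \<le> j" "j \<le> N"
  shows "(\<Sum>k=i..<j. dist (q k) (q (Suc k)))
    \<le> dist (q i) (q j) + ((\<Sum>k<N. dist (q k) (q (Suc k))) - dist (q 0) (q N))"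
proof -
  let ?len = "\<lambda>a b. \<Sum>k=a..<b. dist (q k) (q (Suc k))"
  have "dist (q 0) (q N) \<le> dist (q 0) (q i) + dist (q i) (q j) + dist (q j) (q N)"
    by (smt (verit) dist_triangle)
  also have "\<dots> \<le> ?len 0 i + dist (q i) (q j) + ?len j N"
    using dist_le_sum_chain[of 0 i q] dist_le_sum_chain[of j N q] assms by simp
  moreover have "(\<Sum>k<N. dist (q k) (q (Suc k))) = ?len 0 i + ?len i j + ?len j N"
    using assms by (simp add: atLeast0LessThan[symmetric] sum.atLeastLessThan_concat)
  ultimately show ?thesis by linarith
qed

lemma exists_separated_selection:
  fixes q :: "nat \<Rightarrow> 'a::metric_space" and w :: "nat \<Rightarrow> real"
  assumes "finite G" and w: "\<And>i. 0 \<le> w i"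
    and local: "\<And>c. (\<Sum>i\<in>{i\<in>G. dist (q i) c < r}. w i) \<le> \<beta>"
    and heavy: "real n * \<beta> < (\<Sum>i\<in>G. w i)"
  shows "\<exists>idx. (\<forall>i<n. idx i \<in> G) \<and> (\<forall>i<n. \<forall>j<n. i \<noteq> j \<longrightarrow> r \<le> dist (q (idx i)) (q (idx j)))"
proof -
  have "0 \<le> (\<Sum>i\<in>{i\<in>G. dist (q i) (q 0) < r}. w i)" using w by (simp add: sum_nonneg)
  then have "0 \<le> \<beta>" using local by (rule order_trans)
  have "k \<le> n \<Longrightarrow> \<exists>idx. (\<forall>i<k. idx i \<in> G) \<and> (\<forall>i<k. \<forall>j<k. i \<noteq> j \<longrightarrow> r \<le> dist (q (idx i)) (q (idx j)))"
    for k
  proof (induction k)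
    case (Suc k)
    then obtain idx where idx: "\<forall>i<k. idx i \<in> G" "\<forall>i<k. \<forall>j<k. i \<noteq> j \<longrightarrow> r \<le> dist (q (idx i)) (q (idx j))"
      by auto
    have "\<exists>j\<in>G. \<forall>i<k. r \<le> dist (q j) (q (idx i))"
    proof (rule ccontr)
      assume "\<not> ?thesis"
      then have cover: "\<forall>j\<in>G. \<exists>i<k. dist (q j) (q (idx i)) < r" by (auto simp: not_le)
      have "(\<Sum>j\<in>G. w j) \<le> (\<Sum>j\<in>G. \<Sum>i<k. of_bool (dist (q j) (q (idx i)) < r) * w j)"
      proof (rule sum_mono)
        fix j assume "j \<in> G"
        then obtain i where "i < k" "dist (q j) (q (idx i)) < r" using cover by blast
        then show "w j \<le> (\<Sum>i<k. of_bool (dist (q j) (q (idx i)) < r) * w j)"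
          using member_le_sum[of i "{..<k}" "\<lambda>i. of_bool (dist (q j) (q (idx i)) < r) * w j"] w
          by simp
      qed
      also have "\<dots> = (\<Sum>i<k. \<Sum>j\<in>{j\<in>G. dist (q j) (q (idx i)) < r}. w j)"
        using \<open>finite G\<close> by (subst sum.swap) (simp add: Int_def)
      also have "\<dots> \<le> real k * \<beta>"
        using sum_bounded_above[of "{..<k}", OF local] by simp
      also have "\<dots> \<le> real n * \<beta>"
        using Suc.prems \<open>0 \<le> \<beta>\<close> by (simp add: mult_right_mono)
      finally show False using heavy by simp
    qed
    then obtain j where "j \<in> G" "\<forall>i<k. r \<le> dist (q j) (q (idx i))" by blast
    then show ?case
      using idx by (intro exI[of _ "idx(k := j)"]) (auto simp: less_Suc_eq dist_commute)
  qed simp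
  then show ?thesis by blast
qed

lemma sum_flat_steps_le:
  fixes p :: "nat \<Rightarrow> 'm::metric_space" and y :: "'m \<Rightarrow> 'x::real_normed_vector" and \<epsilon> :: real and N :: nat
  assumes y: "\<nu>-lipschitz_on UNIV y"
  defines "steep \<equiv> {i. i < N \<and> 0 < dist (p i) (p (Suc i)) \<and>
    (1 - \<epsilon>) * \<nu> * dist (p i) (p (Suc i)) \<le> dist (y (p i)) (y (p (Suc i)))}"
  shows "\<epsilon> * \<nu> * (\<Sum>i\<in>{..<N} - steep. dist (p i) (p (Suc i)))
    \<le> \<nu> * (\<Sum>i<N. dist (p i) (p (Suc i))) - dist (y (p 0)) (y (p N))"
proof -
  define excess where "excess i = \<nu> * dist (p i) (p (Suc i)) - dist (y (p i)) (y (p (Suc i)))" for i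
  have excess_nonneg: "0 \<le> excess i" for i
    using lipschitz_onD[OF y] by (simp add: excess_def)
  have "\<epsilon> * \<nu> * dist (p i) (p (Suc i)) \<le> excess i" if "i \<in> {..<N} - steep" for i
  proof (cases "dist (p i) (p (Suc i)) = 0")
    case False
    then show ?thesis using that by (auto simp: steep_def excess_def algebra_simps)
  qed (simp add: excess_nonneg)
  then have "\<epsilon> * \<nu> * (\<Sum>i\<in>{..<N} - steep. dist (p i) (p (Suc i))) \<le> (\<Sum>i\<in>{..<N} - steep. excess i)"
    unfolding sum_distrib_left by (intro sum_mono) blast
  also have "\<dots> \<le> (\<Sum>i<N. excess i)"
    using excess_nonneg by (intro sum_mono2) auto
  also have "\<dots> = \<nu> * (\<Sum>i<N. dist (p i) (p (Suc i))) - (\<Sum>i<N. dist (y (p i)) (y (p (Suc i))))"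
    by (simp add: excess_def sum_subtractf sum_distrib_left)
  also have "\<dots> \<le> \<nu> * (\<Sum>i<N. dist (p i) (p (Suc i))) - dist (y (p 0)) (y (p N))"
    using dist_le_sum_chain[of 0 N "y \<circ> p"] by (simp add: atLeast0LessThan)
  finally show ?thesis .
qed

lemma sum_steps_near_le:
  fixes p :: "nat \<Rightarrow> 'm::metric_space"
  assumes mesh: "\<And>i. i < N \<Longrightarrow> dist (p i) (p (Suc i)) \<le> \<mu>" and "0 \<le> r" "0 \<le> \<mu>"
  shows "(\<Sum>i\<in>{i. i < N \<and> dist (p i) c < r}. dist (p i) (p (Suc i)))
    \<le> 2 * r + ((\<Sum>i<N. dist (p i) (p (Suc i))) - dist (p 0) (p N)) + \<mu>"
  (is "(\<Sum>i\<in>?near. ?d i) \<le> _")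
proof (cases "?near = {}")
  case True
  have "dist (p 0) (p N) \<le> (\<Sum>i<N. ?d i)"
    using dist_le_sum_chain[of 0 N p] by (simp add: atLeast0LessThan)
  moreover have "?near = {}" using True .
  ultimately show ?thesis using assms by (simp del: Collect_empty_eq)
next
  case False
  have fin: "finite ?near" by simp
  define lo hi where "lo = Min ?near" and "hi = Max ?near"
  have lo: "lo \<in> ?near" and hi: "hi \<in> ?near"
    unfolding lo_def hi_def using Min_in[OF fin False] Max_in[OF fin False] by blast+
  have "?near \<subseteq> {lo..<Suc hi}" using fin by (auto simp: lo_def hi_def less_Suc_eq_le)
  then have "(\<Sum>i\<in>?near. ?d i) \<le> (\<Sum>i=lo..<Suc hi. ?d i)" by (intro sum_mono2) auto
  also have "\<dots> = (\<Sum>i=lo..<hi. ?d i) + ?d hi"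
    using \<open>?near \<subseteq> {lo..<Suc hi}\<close> hi by (subst sum.atLeastLessThan_Suc) auto
  also have "(\<Sum>i=lo..<hi. ?d i) \<le> dist (p lo) (p hi) + ((\<Sum>i<N. ?d i) - dist (p 0) (p N))"
    using \<open>?near \<subseteq> {lo..<Suc hi}\<close> hi by (intro sum_chain_segment_le) auto
  also have "dist (p lo) (p hi) \<le> 2 * r"
    using lo hi dist_triangle3[of "p lo" "p hi" c] by (auto simp: dist_commute)
  also have "?d hi \<le> \<mu>" using hi mesh by simp
  finally show ?thesis by simp
qed

(* Steps on which y is not (1 - \<epsilon>)-steep carry less than half of the length d, while the steps
   starting in any r-ball have total length at most 2 r + \<eta> d + \<mu>; so greedy selection applies. *)
lemma chain_separated_steep_steps:
  fixes p :: "nat \<Rightarrow> 'm::metric_space" and y :: "'m \<Rightarrow> 'x::real_normed_vector" and N :: nat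
  defines "d \<equiv> dist (p 0) (p N)"
  assumes y: "\<nu>-lipschitz_on UNIV y" and "0 < \<nu>" "0 < \<epsilon>"
    and slope: "(1 - \<epsilon>/4) * \<nu> * d < dist (y (p 0)) (y (p N))"
    and length: "(\<Sum>i<N. dist (p i) (p (Suc i))) \<le> (1 + \<eta>) * d" and "\<eta> \<le> \<epsilon>/4"
    and mesh: "\<And>i. i < N \<Longrightarrow> dist (p i) (p (Suc i)) \<le> \<mu>" and "0 \<le> r" "0 \<le> \<mu>"
    and small: "real n * (2 * r + \<eta> * d + \<mu>) \<le> d / 2"
  shows "\<exists>idx. (\<forall>i<n. idx i < N \<and> 0 < dist (p (idx i)) (p (Suc (idx i))) \<and>
      (1 - \<epsilon>) * \<nu> * dist (p (idx i)) (p (Suc (idx i))) \<le> dist (y (p (idx i))) (y (p (Suc (idx i)))))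
    \<and> (\<forall>i<n. \<forall>j<n. i \<noteq> j \<longrightarrow> r \<le> dist (p (idx i)) (p (idx j)))"
proof -
  define steep where "steep = {i. i < N \<and> 0 < dist (p i) (p (Suc i)) \<and>
    (1 - \<epsilon>) * \<nu> * dist (p i) (p (Suc i)) \<le> dist (y (p i)) (y (p (Suc i)))}"
  let ?d = "\<lambda>i. dist (p i) (p (Suc i))"
  have "d \<le> (\<Sum>i<N. ?d i)"
    using dist_le_sum_chain[of 0 N p] by (simp add: d_def atLeast0LessThan)
  have "\<epsilon> * \<nu> * (\<Sum>i\<in>{..<N} - steep. ?d i) < \<nu> * ((1 + \<eta>) * d) - (1 - \<epsilon>/4) * \<nu> * d"
    using sum_flat_steps_le[OF y, where \<epsilon>=\<epsilon> and N=N and p=p] slope length \<open>0 < \<nu>\<close>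
    unfolding steep_def d_def by (smt (verit) mult_left_mono)
  also have "\<dots> = \<nu> * d * (\<eta> + \<epsilon>/4)" by (simp add: algebra_simps)
  also have "\<dots> \<le> \<nu> * d * (\<epsilon>/2)"
    using \<open>\<eta> \<le> \<epsilon>/4\<close> \<open>0 < \<nu>\<close> by (intro mult_left_mono) (auto simp: d_def)
  also have "\<dots> = \<epsilon> * \<nu> * (d / 2)" by simp
  finally have "(\<Sum>i\<in>{..<N} - steep. ?d i) < d / 2"
    using \<open>0 < \<epsilon>\<close> \<open>0 < \<nu>\<close> by (simp add: mult_less_cancel_left_pos)
  moreover have "(\<Sum>i<N. ?d i) = (\<Sum>i\<in>steep. ?d i) + (\<Sum>i\<in>{..<N} - steep. ?d i)"
    by (subst sum.subset_diff[of steep]) (auto simp: steep_def)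
  ultimately have heavy: "real n * (2 * r + \<eta> * d + \<mu>) < (\<Sum>i\<in>steep. ?d i)"
    using \<open>d \<le> (\<Sum>i<N. ?d i)\<close> small by linarith
  have local: "(\<Sum>i\<in>{i\<in>steep. dist (p i) c < r}. ?d i) \<le> 2 * r + \<eta> * d + \<mu>" for c
  proof -
    have "(\<Sum>i\<in>{i\<in>steep. dist (p i) c < r}. ?d i) \<le> (\<Sum>i\<in>{i. i < N \<and> dist (p i) c < r}. ?d i)"
      by (intro sum_mono2) (auto simp: steep_def)
    also have "\<dots> \<le> 2 * r + ((\<Sum>i<N. ?d i) - d) + \<mu>"
      unfolding d_def using mesh \<open>0 \<le> r\<close> \<open>0 \<le> \<mu>\<close> by (rule sum_steps_near_le)
    finally show ?thesis using length by (simp add: algebra_simps)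
  qed
  obtain idx where "\<forall>i<n. idx i \<in> steep" "\<forall>i<n. \<forall>j<n. i \<noteq> j \<longrightarrow> r \<le> dist (p (idx i)) (p (idx j))"
    using exists_separated_selection[of steep "?d" p r, OF _ _ local heavy] by (auto simp: steep_def)
  then show ?thesis by (auto simp: steep_def)
qed

lemma length_space_fine_chain:
  fixes a b :: "'m::metric_space"
  assumes "length_space (UNIV::'m set)" "a \<noteq> b" "0 < \<eta>" "0 < \<mu>"
  obtains N p where "p 0 = a" "p N = b" "\<And>i. i < N \<Longrightarrow> dist (p i) (p (Suc i)) < \<mu>"
    "(\<Sum>i<N. dist (p i) (p (Suc i))) < (1 + \<eta>) * dist a b"
proof -
  have "ereal (dist a b)
      = Inf {curve_length g 0 1 |g. continuous_on {0..1} g \<and> g ` {0..1} \<subseteq> UNIV \<and> g 0 = a \<and> g 1 = b}"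
    using assms(1) unfolding length_space_def by blast
  moreover have "dist a b < (1 + \<eta>) * dist a b" using assms(2,3) by simp
  ultimately have "Inf {curve_length g 0 1 |g. continuous_on {0..1} g \<and> g ` {0..1} \<subseteq> UNIV \<and> g 0 = a \<and> g 1 = b}
      < ereal ((1 + \<eta>) * dist a b)"
    by (metis less_ereal.simps(1))
  then obtain g where g: "continuous_on {0..1} g" "g 0 = a" "g 1 = b"
    and short: "curve_length g 0 1 < ereal ((1 + \<eta>) * dist a b)"
    unfolding Inf_less_iff by blast
  obtain \<delta> where "0 < \<delta>" and \<delta>: "\<And>t t'. t \<in> {0..1} \<Longrightarrow> t' \<in> {0..1} \<Longrightarrow> dist t' t < \<delta> \<Longrightarrow> dist (g t') (g t) < \<mu>"
    using compact_uniformly_continuous[OF g(1) compact_Icc] \<open>0 < \<mu>\<close>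
    unfolding uniformly_continuous_on_def by metis
  obtain N0 where N0: "inverse (real (Suc N0)) < \<delta>" using reals_Archimedean[OF \<open>0 < \<delta>\<close>] by blast
  define N where "N = Suc N0"
  define t where "t i = real i / real N" for i
  define p where "p = g \<circ> t"
  show ?thesis
  proof
    show "p 0 = a" "p N = b" using g by (simp_all add: p_def t_def N_def)
    show "dist (p i) (p (Suc i)) < \<mu>" if "i < N" for i
    proof -
      have "dist (t (Suc i)) (t i) = 1 / real N"
        by (simp add: t_def dist_real_def N_def diff_divide_distrib[symmetric])
      then show ?thesis
        using \<delta>[of "t i" "t (Suc i)"] N0 that
        by (auto simp: p_def t_def N_def dist_commute divide_le_eq inverse_eq_divide)
    qed
    have "ereal (\<Sum>i<N. dist (g (t (Suc i))) (g (t i))) \<le> curve_length g 0 1"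
      unfolding curve_length_def
      by (rule Sup_upper) (auto simp: t_def N_def divide_right_mono intro!: exI[of _ N] exI[of _ t])
    also note short
    finally show "(\<Sum>i<N. dist (p i) (p (Suc i))) < (1 + \<eta>) * dist a b"
      by (simp add: p_def dist_commute)
  qed
qed

lemma length_space_separated_steep_pairs:
  fixes y :: "'m::metric_space \<Rightarrow> 'x::real_normed_vector" and n :: nat
  assumes "length_space (UNIV::'m set)" and y: "\<nu>-lipschitz_on UNIV y" "0 < \<nu>"
    and ab: "a \<noteq> b" "(1 - \<epsilon>/4) * \<nu> * dist a b < dist (y a) (y b)" and "0 < \<epsilon>" "1 \<le> R"
  obtains L u v where "0 < L"
    "\<And>i. i < n \<Longrightarrow> u i \<noteq> v i" "\<And>i. i < n \<Longrightarrow> dist (u i) (v i) * R \<le> L"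
    "\<And>i. i < n \<Longrightarrow> (1 - \<epsilon>) * \<nu> * dist (u i) (v i) \<le> dist (y (u i)) (y (v i))"
    "\<And>i j. i < n \<Longrightarrow> j < n \<Longrightarrow> i \<noteq> j \<Longrightarrow> 2 * L \<le> dist (u i) (u j)"
proof -
  define d where "d = dist a b"
  define m where "m = real n + 1"
  define \<eta> where "\<eta> = min (\<epsilon>/4) (1 / (8 * m))"
  define r where "r = d / (8 * m)"
  define \<mu> where "\<mu> = r / (2 * R)"
  have "0 < d" "0 < m" using ab by (simp_all add: d_def m_def)
  have "0 < \<eta>" "0 < r" "0 < \<mu>" using \<open>0 < d\<close> \<open>0 < m\<close> \<open>0 < \<epsilon>\<close> \<open>1 \<le> R\<close>
    by (simp_all add: \<eta>_def r_def \<mu>_def)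
  have "\<eta> * d \<le> 1 / (8 * m) * d"
    unfolding \<eta>_def using \<open>0 < d\<close> by (intro mult_right_mono) auto
  moreover have "\<mu> \<le> r / 2"
    unfolding \<mu>_def using \<open>0 < r\<close> \<open>1 \<le> R\<close> by (intro divide_left_mono) auto
  ultimately have "real n * (2 * r + \<eta> * d + \<mu>) \<le> m * (2 * r + d / (8 * m) + r / 2)"
    using \<open>0 < r\<close> \<open>0 < \<eta>\<close> \<open>0 < \<mu>\<close> \<open>0 < d\<close> by (intro mult_mono) (auto simp: m_def)
  also have "\<dots> = 7 * d / 16" using \<open>0 < m\<close> by (simp add: r_def field_simps)
  finally have small: "real n * (2 * r + \<eta> * d + \<mu>) \<le> d / 2" using \<open>0 < d\<close> by simp
  obtain N p where p: "p 0 = a" "p N = b" and mesh: "\<And>i. i < N \<Longrightarrow> dist (p i) (p (Suc i)) < \<mu>"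
    and length: "(\<Sum>i<N. dist (p i) (p (Suc i))) < (1 + \<eta>) * d"
    using length_space_fine_chain[OF assms(1) ab(1) \<open>0 < \<eta>\<close> \<open>0 < \<mu>\<close>] unfolding d_def by blast
  obtain idx where steep: "\<And>i. i < n \<Longrightarrow> idx i < N \<and> 0 < dist (p (idx i)) (p (Suc (idx i))) \<and>
      (1 - \<epsilon>) * \<nu> * dist (p (idx i)) (p (Suc (idx i))) \<le> dist (y (p (idx i))) (y (p (Suc (idx i))))"
    and sep: "\<And>i j. i < n \<Longrightarrow> j < n \<Longrightarrow> i \<noteq> j \<Longrightarrow> r \<le> dist (p (idx i)) (p (idx j))"
    using chain_separated_steep_steps[OF y, of \<epsilon> p N \<eta> \<mu> r n] ab length small mesh p
      \<open>0 < \<epsilon>\<close> \<open>0 < r\<close> \<open>0 < \<mu>\<close>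
    by (fastforce simp: d_def \<eta>_def less_imp_le)
  show ?thesis
  proof
    show "0 < r / 2" using \<open>0 < r\<close> by simp
    fix i assume "i < n"
    show "p (idx i) \<noteq> p (Suc (idx i))" using steep[OF \<open>i < n\<close>] by auto
    have "dist (p (idx i)) (p (Suc (idx i))) * R \<le> \<mu> * R"
      using mesh steep[OF \<open>i < n\<close>] \<open>1 \<le> R\<close> by (intro mult_right_mono) (auto simp: less_imp_le)
    then show "dist (p (idx i)) (p (Suc (idx i))) * R \<le> r / 2"
      using \<open>1 \<le> R\<close> by (simp add: \<mu>_def)
    show "(1 - \<epsilon>) * \<nu> * dist (p (idx i)) (p (Suc (idx i))) \<le> dist (y (p (idx i))) (y (p (Suc (idx i))))"
      using steep[OF \<open>i < n\<close>] by blast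
  next
    fix i j assume "i < n" "j < n" "i \<noteq> j"
    then show "2 * (r / 2) \<le> dist (p (idx i)) (p (idx j))" using sep by simp
  qed
qed

section \<open>Bounded functionals on Lip0\<close>

locale Lip0_functional =
  fixes m0 :: "'m::metric_space" and \<phi> :: "('m \<Rightarrow> 'x::real_normed_vector) \<Rightarrow> real" and C :: real
  assumes two_points: "\<exists>x y::'m. x \<noteq> y"
    and add: "\<And>f g. f \<in> Lip0 m0 \<Longrightarrow> g \<in> Lip0 m0 \<Longrightarrow> \<phi> (\<lambda>t. f t + g t) = \<phi> f + \<phi> g"
    and scaleR: "\<And>f c. f \<in> Lip0 m0 \<Longrightarrow> \<phi> (\<lambda>t. c *\<^sub>R f t) = c * \<phi> f"
    and bounded: "\<And>f. f \<in> Lip0 m0 \<Longrightarrow> \<bar>\<phi> f\<bar> \<le> C * lipnorm f"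
    and C_nonneg: "0 \<le> C"
begin

lemma Lip0_sum_phi:
  fixes k :: "nat \<Rightarrow> 'm \<Rightarrow> 'x" and n :: nat
  assumes "\<And>i. i < n \<Longrightarrow> k i \<in> Lip0 m0"
  shows "(\<lambda>x. \<Sum>i<n. k i x) \<in> Lip0 m0 \<and> \<phi> (\<lambda>x. \<Sum>i<n. k i x) = (\<Sum>i<n. \<phi> (k i))"
  using assms
proof (induction n)
  case 0
  have "\<phi> (\<lambda>t. 0 *\<^sub>R 0) = 0 * \<phi> (\<lambda>t. 0)" by (rule scaleR[OF Lip0_zero])
  then show ?case using Lip0_zero by simp
next
  case (Suc n)
  then show ?case using Lip0_add[of "\<lambda>x. \<Sum>i<n. k i x" m0 "k n"] add by simp
qed

lemma exists_summand_phi_ge: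
  fixes k :: "nat \<Rightarrow> 'm \<Rightarrow> 'x" and n :: nat
  assumes k: "\<And>i. i < n \<Longrightarrow> k i \<in> Lip0 m0" and sum: "B-lipschitz_on UNIV (\<lambda>x. \<Sum>i<n. k i x)"
    and "0 < n"
  obtains i where "i < n" "- (C * B) / real n \<le> \<phi> (k i)"
proof -
  have ksum: "(\<lambda>x. \<Sum>i<n. k i x) \<in> Lip0 m0 \<and> \<phi> (\<lambda>x. \<Sum>i<n. k i x) = (\<Sum>i<n. \<phi> (k i))"
    using k by (rule Lip0_sum_phi)
  have "\<bar>\<phi> (\<lambda>x. \<Sum>i<n. k i x)\<bar> \<le> C * lipnorm (\<lambda>x. \<Sum>i<n. k i x)"
    using ksum bounded by blast
  also have "\<dots> \<le> C * B"
    using lipnorm_least[OF two_points sum] C_nonneg by (rule mult_left_mono)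
  finally have bound: "\<bar>\<Sum>i<n. \<phi> (k i)\<bar> \<le> C * B" using ksum by simp
  have "\<exists>i<n. - (C * B) / real n \<le> \<phi> (k i)"
  proof (rule ccontr)
    assume "\<not> ?thesis"
    then have "(\<Sum>i<n. \<phi> (k i)) < (\<Sum>i<n. - (C * B) / real n)"
      using \<open>0 < n\<close> by (intro sum_strict_mono) (auto simp: not_le)
    then have "(\<Sum>i<n. \<phi> (k i)) < - (C * B)" using \<open>0 < n\<close> by simp
    then show False using bound by linarith
  qed
  then show thesis using that by blast
qed

lemma exists_good_patch:
  assumes F: "F \<in> Lip0 m0" "a-lipschitz_on UNIV F" and Y: "a-lipschitz_on UNIV Y"
    and contraction: "a * (1 + 2 / K) \<le> 1" and "0 < s" "0 < K" "0 < n"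
    and sep: "\<And>i j. i < n \<Longrightarrow> j < n \<Longrightarrow> i \<noteq> j \<Longrightarrow> 2 * (s * exp K) \<le> dist (u i) (u j)"
  obtains i where "i < n" "(\<lambda>x. patch F Y (u i) s K x - patch F Y (u i) s K m0) \<in> Lip0 m0"
    "lipnorm (\<lambda>x. patch F Y (u i) s K x - patch F Y (u i) s K m0) \<le> 1"
    "\<phi> F - 4 * C / real n \<le> \<phi> (\<lambda>x. patch F Y (u i) s K x - patch F Y (u i) s K m0)"
proof -
  define k where "k i x = (patch F Y (u i) s K x - F x) - patch F Y (u i) s K m0" for i x
  have "F m0 = 0" using F(1) by (simp add: Lip0_iff)
  have patch_lip: "1-lipschitz_on UNIV (patch F Y (u i) s K)" for i
    by (rule lipschitz_on_mono[OF lipschitz_on_patch[OF \<open>0 < s\<close> \<open>0 < K\<close> F(2) Y]]) (use contraction in auto)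
  have "(1 + a + 0)-lipschitz_on UNIV (k i)" for i
    unfolding k_def by (intro lipschitz_on_diff patch_lip F(2) lipschitz_on_constant)
  then have k_Lip0: "k i \<in> Lip0 m0" for i unfolding Lip0_iff using \<open>F m0 = 0\<close> by (auto simp: k_def)
  have "4-lipschitz_on UNIV (\<lambda>x. \<Sum>i<n. patch F Y (u i) s K x - F x)"
    using lipschitz_on_sum_patches[OF F(2) Y contraction \<open>0 < s\<close> \<open>0 < K\<close>] sep by blast
  from lipschitz_on_diff[OF this lipschitz_on_constant]
  have k_lip: "4-lipschitz_on UNIV (\<lambda>x. \<Sum>i<n. k i x)" by (simp add: k_def sum_subtractf)
  obtain i where "i < n" and ki: "- (C * 4) / real n \<le> \<phi> (k i)"
    using exists_summand_phi_ge[OF k_Lip0 k_lip \<open>0 < n\<close>] by blast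
  have z: "(\<lambda>x. patch F Y (u i) s K x - patch F Y (u i) s K m0) = (\<lambda>x. F x + k i x)"
    by (simp add: k_def)
  show ?thesis
  proof
    show "(\<lambda>x. patch F Y (u i) s K x - patch F Y (u i) s K m0) \<in> Lip0 m0"
      unfolding z by (rule Lip0_add[OF F(1) k_Lip0])
    have "(1 + 0)-lipschitz_on UNIV (\<lambda>x. patch F Y (u i) s K x - patch F Y (u i) s K m0)"
      by (intro lipschitz_on_diff patch_lip lipschitz_on_constant)
    then show "lipnorm (\<lambda>x. patch F Y (u i) s K x - patch F Y (u i) s K m0) \<le> 1"
      using lipnorm_least[OF two_points] by simp
    show "\<phi> F - 4 * C / real n \<le> \<phi> (\<lambda>x. patch F Y (u i) s K x - patch F Y (u i) s K m0)"
      unfolding z using add[OF F(1) k_Lip0] ki by (simp add: mult.commute)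
  qed (rule \<open>i < n\<close>)
qed

lemma steep_perturbation:
  assumes LS: "length_space (UNIV::'m set)" and y: "y \<in> Lip0 m0" "0 < lipnorm y"
    and g: "g \<in> Lip0 m0" "lipnorm g \<le> 1" and \<delta>: "0 < \<delta>" "\<delta> < 1" and "0 < \<eta>"
  obtains z u v where "z \<in> Lip0 m0" "lipnorm z \<le> 1" "(1 - \<delta>) * \<phi> g - \<eta> \<le> \<phi> z"
    "u \<noteq> v" "z u - z v = ((1 - \<delta>) / lipnorm y) *\<^sub>R (y u - y v)"
    "(1 - \<delta>) * lipnorm y * dist u v \<le> dist (y u) (y v)"
proof -
  define \<nu> where "\<nu> = lipnorm y"
  define F where "F = (\<lambda>t. (1 - \<delta>) *\<^sub>R g t)"
  define Y where "Y = (\<lambda>t. ((1 - \<delta>) / \<nu>) *\<^sub>R y t)"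
  define K where "K = 2 / \<delta>"
  have "0 < \<nu>" "0 < K" using y \<delta> by (simp_all add: \<nu>_def K_def)
  have y\<nu>: "\<nu>-lipschitz_on UNIV y" unfolding \<nu>_def by (rule lipschitz_on_Lip0[OF two_points y(1)])
  have "1-lipschitz_on UNIV g"
    using lipschitz_on_mono[OF lipschitz_on_Lip0[OF two_points g(1)] _ g(2)] by simp
  then have F: "(1 - \<delta>)-lipschitz_on UNIV F"
    unfolding F_def using lipschitz_on_cmult[of 1 UNIV g "1 - \<delta>"] \<delta> by simp
  have Y: "(1 - \<delta>)-lipschitz_on UNIV Y"
    unfolding Y_def using lipschitz_on_cmult[OF y\<nu>, of "(1 - \<delta>) / \<nu>"] \<delta> \<open>0 < \<nu>\<close> by simp
  have contraction: "(1 - \<delta>) * (1 + 2 / K) \<le> 1"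
    using \<delta> by (simp add: K_def algebra_simps)
  obtain a b where ab: "a \<noteq> b" "(1 - \<delta>/4) * \<nu> * dist a b < dist (y a) (y b)"
    using less_lipnorm_witness[OF two_points y\<nu>, of "(1 - \<delta>/4) * \<nu>"] \<open>0 < \<nu>\<close> \<delta>
    unfolding \<nu>_def by auto
  obtain n :: nat where "4 * C < real n * \<eta>"
    using reals_Archimedean3[OF \<open>0 < \<eta>\<close>] by blast
  then have "0 < n" and n: "4 * C / real n \<le> \<eta>"
    using C_nonneg by (auto simp: divide_le_eq mult.commute intro!: Nat.gr0I)
  obtain L u v where "0 < L" and uv: "\<And>i. i < n \<Longrightarrow> u i \<noteq> v i"
    "\<And>i. i < n \<Longrightarrow> dist (u i) (v i) * exp K \<le> L"
    "\<And>i. i < n \<Longrightarrow> (1 - \<delta>) * \<nu> * dist (u i) (v i) \<le> dist (y (u i)) (y (v i))"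
    and sep: "\<And>i j. i < n \<Longrightarrow> j < n \<Longrightarrow> i \<noteq> j \<Longrightarrow> 2 * L \<le> dist (u i) (u j)"
    using length_space_separated_steep_pairs[OF LS y\<nu> \<open>0 < \<nu>\<close> ab \<delta>(1), of "exp K" n] \<open>0 < K\<close>
    by auto
  define s where "s = L / exp K"
  have "0 < s" "s * exp K = L" using \<open>0 < L\<close> by (simp_all add: s_def)
  have "F \<in> Lip0 m0" unfolding F_def by (rule Lip0_scaleR[OF g(1)])
  obtain i where "i < n" and z: "(\<lambda>x. patch F Y (u i) s K x - patch F Y (u i) s K m0) \<in> Lip0 m0"
    "lipnorm (\<lambda>x. patch F Y (u i) s K x - patch F Y (u i) s K m0) \<le> 1"
    "\<phi> F - 4 * C / real n \<le> \<phi> (\<lambda>x. patch F Y (u i) s K x - patch F Y (u i) s K m0)"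
    using exists_good_patch[OF \<open>F \<in> Lip0 m0\<close> F Y contraction \<open>0 < s\<close> \<open>0 < K\<close> \<open>0 < n\<close>, of u]
      sep \<open>s * exp K = L\<close> by blast
  have "dist (u i) (v i) * exp K \<le> s * exp K"
    using uv(2)[OF \<open>i < n\<close>] \<open>s * exp K = L\<close> by simp
  then have "dist (v i) (u i) \<le> s" by (simp add: dist_commute)
  moreover have "dist (u i) (u i) \<le> s" using \<open>0 < s\<close> by simp
  ultimately have "patch F Y (u i) s K (u i) - patch F Y (u i) s K (v i) = Y (u i) - Y (v i)"
    using patch_near[OF \<open>0 < s\<close> \<open>0 < K\<close>, where F=F and Y=Y and u="u i"] by simp
  moreover have "\<phi> F = (1 - \<delta>) * \<phi> g" unfolding F_def by (rule scaleR[OF g(1)])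
  ultimately show ?thesis
    using that[OF z(1,2), of "u i" "v i"] z(3) n uv(1,3)[OF \<open>i < n\<close>]
    by (simp add: Y_def \<nu>_def scaleR_diff_right)
qed

lemma almost_norming_perturbation:
  assumes LS: "length_space (UNIV::'m set)" and y: "y \<in> Lip0 m0" "0 < lipnorm y"
    and f0: "f0 \<in> Lip0 m0" "lipnorm f0 \<le> 1" and \<theta>: "0 < \<theta>" "\<theta> < 1"
  obtains f where "f \<in> Lip0 m0" "lipnorm f \<le> 1"
    "(1 - \<theta>)\<^sup>2 * (1 + lipnorm y * \<bar>\<phi> f0\<bar>) - \<theta> \<le> lipnorm (\<lambda>t. f t + \<phi> f *\<^sub>R y t)"
proof -
  define \<nu> where "\<nu> = lipnorm y"
  have "0 < \<nu>" using y by (simp add: \<nu>_def)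
  define g where "g = (\<lambda>t. sgn (\<phi> f0) *\<^sub>R f0 t)"
  have "lipnorm g = \<bar>sgn (\<phi> f0)\<bar> * lipnorm f0"
    unfolding g_def by (rule lipnorm_scaleR[OF two_points lipschitz_on_Lip0[OF two_points f0(1)]])
  also have "\<dots> \<le> 1" using f0(2) by (simp add: abs_sgn_eq)
  finally have g: "g \<in> Lip0 m0" "lipnorm g \<le> 1" "\<phi> g = \<bar>\<phi> f0\<bar>"
    using Lip0_scaleR[OF f0(1)] scaleR[OF f0(1)] by (simp_all add: g_def abs_sgn)
  obtain z u v where z: "z \<in> Lip0 m0" "lipnorm z \<le> 1" and \<phi>z: "(1 - \<theta>) * \<phi> g - \<theta> / \<nu> \<le> \<phi> z"
    and "u \<noteq> v" and zuv: "z u - z v = ((1 - \<theta>) / \<nu>) *\<^sub>R (y u - y v)"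
    and steep: "(1 - \<theta>) * \<nu> * dist u v \<le> dist (y u) (y v)"
    using steep_perturbation[OF LS y g(1,2) \<theta> divide_pos_pos[OF \<theta>(1) \<open>0 < \<nu>\<close>]] unfolding \<nu>_def
    by blast
  define w where "w t = z t + \<phi> z *\<^sub>R y t" for t
  define c where "c = (1 - \<theta>) / \<nu> + \<phi> z"
  have "w \<in> Lip0 m0" unfolding w_def by (intro Lip0_add Lip0_scaleR z y)
  have "w u - w v = c *\<^sub>R (y u - y v)"
    using zuv by (simp add: w_def c_def algebra_simps)
  then have dist_w: "dist (w u) (w v) = \<bar>c\<bar> * dist (y u) (y v)" by (simp add: dist_norm)
  have "c * ((1 - \<theta>) * \<nu> * dist u v) \<le> \<bar>c\<bar> * ((1 - \<theta>) * \<nu> * dist u v)"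
    using \<theta> \<open>0 < \<nu>\<close> by (intro mult_right_mono) auto
  also have "\<dots> \<le> dist (w u) (w v)"
    unfolding dist_w using steep by (rule mult_left_mono) simp
  also have "\<dots> \<le> lipnorm w * dist u v"
    using lipnorm_bound[OF lipschitz_on_Lip0[OF two_points \<open>w \<in> Lip0 m0\<close>]] .
  finally have "(c * \<nu> * (1 - \<theta>)) * dist u v \<le> lipnorm w * dist u v" by (simp add: mult_ac)
  then have "c * \<nu> * (1 - \<theta>) \<le> lipnorm w"
    by (rule mult_right_le_imp_le) (use \<open>u \<noteq> v\<close> in simp)
  moreover have "(1 - \<theta>)\<^sup>2 * (1 + \<nu> * \<phi> g) - \<theta> \<le> c * \<nu> * (1 - \<theta>)"
  proof -
    have "(1 - \<theta>) * \<phi> g * \<nu> - \<theta> \<le> \<phi> z * \<nu>"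
      using mult_right_mono[OF \<phi>z, of \<nu>] \<open>0 < \<nu>\<close> by (simp add: algebra_simps)
    moreover have "c * \<nu> = (1 - \<theta>) + \<phi> z * \<nu>" using \<open>0 < \<nu>\<close> by (simp add: c_def field_simps)
    ultimately have "(1 - \<theta>) * (1 + \<nu> * \<phi> g) - \<theta> \<le> c * \<nu>" by (simp add: algebra_simps)
    then have "(1 - \<theta>) * ((1 - \<theta>) * (1 + \<nu> * \<phi> g) - \<theta>) \<le> (1 - \<theta>) * (c * \<nu>)"
      using \<theta> by (intro mult_left_mono) auto
    moreover have "(1 - \<theta>) * ((1 - \<theta>) * (1 + \<nu> * \<phi> g) - \<theta>)
        = (1 - \<theta>)\<^sup>2 * (1 + \<nu> * \<phi> g) - \<theta> + \<theta>\<^sup>2"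
      by (simp add: power2_eq_square algebra_simps)
    moreover have "(1 - \<theta>) * (c * \<nu>) = c * \<nu> * (1 - \<theta>)" by simp
    ultimately show ?thesis using zero_le_power2[of \<theta>] by linarith
  qed
  ultimately have "(1 - \<theta>)\<^sup>2 * (1 + \<nu> * \<bar>\<phi> f0\<bar>) - \<theta> \<le> lipnorm w" using g(3) by simp
  then show ?thesis using that[OF z(1,2)] unfolding w_def \<nu>_def by simp
qed

lemma almost_Daugavet_witness:
  assumes LS: "length_space (UNIV::'m set)" and nontrivial: "(UNIV::'x set) \<noteq> {0}"
    and y: "y \<in> Lip0 m0" and "0 \<le> S" and "0 < e"
    and approx: "\<And>\<theta>. 0 < \<theta> \<Longrightarrow> \<exists>f0. f0 \<in> Lip0 m0 \<and> lipnorm f0 \<le> 1 \<and> S - \<theta> < \<bar>\<phi> f0\<bar> * lipnorm y"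
  obtains f where "f \<in> Lip0 m0" "lipnorm f \<le> 1" "1 + S - e \<le> lipnorm (\<lambda>t. f t + \<phi> f *\<^sub>R y t)"
proof (cases "lipnorm y = 0")
  case True
  have "y t = 0" for t
    using lipnorm_bound[OF lipschitz_on_Lip0[OF two_points y], of t m0] y True by (simp add: Lip0_def)
  have "S \<le> 0"
  proof (rule ccontr)
    assume "\<not> S \<le> 0"
    then show False using approx[of S] True by auto
  qed
  obtain e0 :: 'x where "e0 \<noteq> 0" using nontrivial by auto
  then have "norm (sgn e0) = 1" by (simp add: norm_sgn)
  note dist_fun = Lip0_distance_function[OF two_points this, of m0]
  show ?thesis
  proof (rule that[OF dist_fun(1)])
    show "lipnorm (\<lambda>t. dist t m0 *\<^sub>R sgn e0) \<le> 1" using dist_fun(2) by simp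
    show "1 + S - e \<le> lipnorm (\<lambda>t. dist t m0 *\<^sub>R sgn e0 + \<phi> (\<lambda>t. dist t m0 *\<^sub>R sgn e0) *\<^sub>R y t)"
      using dist_fun(2) \<open>\<And>t. y t = 0\<close> \<open>S \<le> 0\<close> \<open>0 < e\<close> by simp
  qed
next
  case False
  then have "0 < lipnorm y"
    using lipnorm_nonneg[OF two_points lipschitz_on_Lip0[OF two_points y]] by simp
  define \<theta> where "\<theta> = min (1/2) (e / (2 * S + 4))"
  have "\<theta> * (2 * S + 4) \<le> e / (2 * S + 4) * (2 * S + 4)"
    using \<open>0 \<le> S\<close> by (intro mult_right_mono) (auto simp: \<theta>_def)
  moreover have "0 < \<theta>" using \<open>0 < e\<close> \<open>0 \<le> S\<close> by (simp add: \<theta>_def)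
  moreover have "\<theta> \<le> 1/2" unfolding \<theta>_def by (rule min.cobounded1)
  ultimately have \<theta>: "0 < \<theta>" "\<theta> < 1" "\<theta> * (2 * S + 4) \<le> e"
    using \<open>0 \<le> S\<close> by simp_all
  obtain f0 where f0: "f0 \<in> Lip0 m0" "lipnorm f0 \<le> 1" "S - \<theta> < \<bar>\<phi> f0\<bar> * lipnorm y"
    using approx[OF \<open>0 < \<theta>\<close>] by blast
  obtain f where f: "f \<in> Lip0 m0" "lipnorm f \<le> 1"
    "(1 - \<theta>)\<^sup>2 * (1 + lipnorm y * \<bar>\<phi> f0\<bar>) - \<theta> \<le> lipnorm (\<lambda>t. f t + \<phi> f *\<^sub>R y t)"
    using almost_norming_perturbation[OF LS y \<open>0 < lipnorm y\<close> f0(1,2) \<theta>(1,2)] by blast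
  have "(1 - 2 * \<theta>) * (1 + S - \<theta>) \<le> (1 - \<theta>)\<^sup>2 * (1 + S - \<theta>)"
    using \<theta> \<open>0 \<le> S\<close> \<open>\<theta> \<le> 1/2\<close> by (intro mult_right_mono) (auto simp: power2_eq_square algebra_simps)
  moreover have "(1 - 2 * \<theta>) * (1 + S - \<theta>) = 1 + S - \<theta> * (2 * S + 4) + \<theta> + 2 * \<theta>\<^sup>2"
    by (simp add: power2_eq_square algebra_simps)
  ultimately have "1 + S - e \<le> (1 - \<theta>)\<^sup>2 * (1 + S - \<theta>) - \<theta>"
    using \<theta>(3) zero_le_power2[of \<theta>] by linarith
  also have "\<dots> \<le> (1 - \<theta>)\<^sup>2 * (1 + lipnorm y * \<bar>\<phi> f0\<bar>) - \<theta>"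
    using f0(3) by (intro diff_right_mono mult_left_mono) (simp_all add: mult.commute)
  finally show ?thesis using that f by (meson order_trans)
qed

lemma Daugavet_equation:
  assumes LS: "length_space (UNIV::'m set)" and nontrivial: "(UNIV::'x set) \<noteq> {0}"
    and y: "y \<in> Lip0 m0"
  shows "Sup {lipnorm (\<lambda>t. f t + \<phi> f *\<^sub>R y t) |f. f \<in> Lip0 m0 \<and> lipnorm f \<le> 1}
    = 1 + Sup {lipnorm (\<lambda>t. \<phi> f *\<^sub>R y t) |f. f \<in> Lip0 m0 \<and> lipnorm f \<le> 1}"
    (is "Sup ?A = 1 + Sup ?B")
proof -
  define \<nu> where "\<nu> = lipnorm y"
  have y\<nu>: "\<nu>-lipschitz_on UNIV y" unfolding \<nu>_def by (rule lipschitz_on_Lip0[OF two_points y])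
  have "0 \<le> \<nu>" using lipschitz_on_nonneg[OF y\<nu>] .
  have B: "?B = {\<bar>\<phi> f\<bar> * \<nu> |f. f \<in> Lip0 m0 \<and> lipnorm f \<le> 1}"
    using lipnorm_scaleR[OF two_points y\<nu>] by (auto simp: \<nu>_def)
  have zero: "(\<lambda>t. 0) \<in> Lip0 m0 \<and> lipnorm (\<lambda>t::'m. 0::'x) \<le> 1"
    using Lip0_zero lipnorm_least[OF two_points lipschitz_on_constant[where c = "0::'x"]] by simp
  then have "?A \<noteq> {}" "?B \<noteq> {}" by blast+
  have "\<bar>\<phi> f\<bar> * \<nu> \<le> C * \<nu>" if "f \<in> Lip0 m0" "lipnorm f \<le> 1" for f
    using bounded[OF that(1)] that(2) C_nonneg \<open>0 \<le> \<nu>\<close>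
    by (intro mult_right_mono) (auto intro: order_trans mult_left_le)
  then have "bdd_above ?B" unfolding B by (intro bdd_aboveI) blast
  define S where "S = Sup ?B"
  have B_upper: "\<bar>\<phi> f\<bar> * \<nu> \<le> S" if "f \<in> Lip0 m0" "lipnorm f \<le> 1" for f
  proof -
    have "\<bar>\<phi> f\<bar> * \<nu> \<in> ?B" unfolding B using that by blast
    then show ?thesis unfolding S_def using \<open>bdd_above ?B\<close> by (rule cSup_upper)
  qed
  have "0 \<le> \<bar>\<phi> (\<lambda>t. 0)\<bar> * \<nu>" using \<open>0 \<le> \<nu>\<close> by simp
  also have "\<dots> \<le> S" using zero by (intro B_upper) auto
  finally have "0 \<le> S" .
  have A_le: "a \<le> 1 + S" if "a \<in> ?A" for a
  proof -
    from that obtain f where f: "f \<in> Lip0 m0" "lipnorm f \<le> 1"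
      and a: "a = lipnorm (\<lambda>t. f t + \<phi> f *\<^sub>R y t)" by blast
    have "a \<le> lipnorm f + \<bar>\<phi> f\<bar> * \<nu>"
      unfolding a
      by (intro lipnorm_least[OF two_points] lipschitz_on_add lipschitz_on_cmult
          lipschitz_on_Lip0[OF two_points f(1)] y\<nu>)
    then show ?thesis using f B_upper[OF f] by linarith
  qed
  have "Sup ?A \<le> 1 + S" using \<open>?A \<noteq> {}\<close> A_le by (rule cSup_least)
  moreover have "1 + S \<le> Sup ?A"
  proof (rule field_le_epsilon)
    fix e :: real assume "0 < e"
    have "\<exists>f0. f0 \<in> Lip0 m0 \<and> lipnorm f0 \<le> 1 \<and> S - \<theta> < \<bar>\<phi> f0\<bar> * lipnorm y" if "0 < \<theta>" for \<theta>
    proof -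
      have "S - \<theta> < Sup ?B" using that by (simp add: S_def)
      then obtain b where "b \<in> ?B" "S - \<theta> < b"
        using less_cSup_iff[OF \<open>?B \<noteq> {}\<close> \<open>bdd_above ?B\<close>] by blast
      then show ?thesis unfolding B by (auto simp: \<nu>_def)
    qed
    then obtain f where "f \<in> Lip0 m0" "lipnorm f \<le> 1" "1 + S - e \<le> lipnorm (\<lambda>t. f t + \<phi> f *\<^sub>R y t)"
      using almost_Daugavet_witness[OF LS nontrivial y \<open>0 \<le> S\<close> \<open>0 < e\<close>] by blast
    moreover have "bdd_above ?A" using A_le by (rule bdd_aboveI)
    ultimately have "1 + S - e \<le> Sup ?A" by (intro order_trans[OF _ cSup_upper]) blast+
    then show "1 + S \<le> Sup ?A + e" by simp
  qed
  ultimately show ?thesis unfolding S_def by linarith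
qed

end

theorem theorem1p1:
  fixes m0 :: "'m::metric_space"
  assumes "complete (UNIV :: 'm set)"
    and "length_space (UNIV :: 'm set)"
    and "\<exists>x y :: 'm. x \<noteq> y"
    and "(UNIV :: 'x::banach set) \<noteq> {0}"
  shows "daugavet_property (Lip0 m0 :: ('m \<Rightarrow> 'x) set) lipnorm"
  unfolding daugavet_property_def
proof (intro allI impI, elim conjE exE)
  fix \<phi> :: "('m \<Rightarrow> 'x) \<Rightarrow> real" and y :: "'m \<Rightarrow> 'x" and C
  assume "\<forall>f\<in>Lip0 m0. \<forall>g\<in>Lip0 m0. \<phi> (\<lambda>t. f t + g t) = \<phi> f + \<phi> g"
    and "\<forall>f\<in>Lip0 m0. \<forall>c. \<phi> (\<lambda>t. c *\<^sub>R f t) = c * \<phi> f"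
    and bound: "\<forall>f\<in>Lip0 m0. \<bar>\<phi> f\<bar> \<le> C * lipnorm f" and "y \<in> Lip0 m0"
  moreover have "\<bar>\<phi> f\<bar> \<le> max C 0 * lipnorm f" if "f \<in> Lip0 m0" for f
  proof -
    have "0 \<le> lipnorm f" using lipschitz_on_nonneg[OF lipschitz_on_Lip0[OF assms(3) that]] .
    then show ?thesis using bound that by (meson max.cobounded1 mult_right_mono order_trans)
  qed
  ultimately interpret Lip0_functional m0 \<phi> "max C 0"
    using assms(3) by unfold_locales auto
  show "Sup {lipnorm (\<lambda>t. f t + \<phi> f *\<^sub>R y t) |f. f \<in> Lip0 m0 \<and> lipnorm f \<le> 1}
      = 1 + Sup {lipnorm (\<lambda>t. \<phi> f *\<^sub>R y t) |f. f \<in> Lip0 m0 \<and> lipnorm f \<le> 1}"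
    by (rule Daugavet_equation) (use assms \<open>y \<in> Lip0 m0\<close> in auto)
qed

end
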